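(* Let $q:V\to\overline K/\overline R$ be a non-trivial generalized $(\sigma,\varepsilon)$-quadratic form with sesquilinearization $f$, such that $P_q$ spans $\mathrm{PG}(V)$. A vector subspace $U$ of $V$ satisfies $[U]\cap P_q=\emptyset$ and $[U]\cap\ell=\emptyset$ for every line $\ell$ of $\mathrm{PG}(V)$ containing at least two points of $P_q$ (i.e. $U$ defines a quotient of the inclusion embedding of $S_q$ in $\mathrm{PG}(V)$) if and only if $U\subseteq\mathrm{Rad}(f)$ and $U\cap\mathrm{Rad}(q)=\{0\}$.
   Context: $K$ division ring, $(\sigma,\varepsilon)$ admissible pair ($\sigma$ anti-automorphism, $\varepsilon^\sigma\varepsilon=1$, $t^{\sigma^2}=\varepsilon t\varepsilon^{-1}$). $\overline K=K/\{t-t^\sigma\varepsilon\}_{t\in K}$, $\bar t$ class of $t$, $\bar t\circ\lambda=\overline{\lambda^\sigma t\lambda}$; closed subgroup: stable under all $\circ\lambda$; $(\bar t+\overline R)\circ\lambda=\bar t\circ\lambda+\overline R$. Generalized $(\sigma,\varepsilon)$-quadratic form with co-defect closed $\overline R$: $q:V\to\overline K/\overline R$ ($V$ right $K$-vector space) with $q(x\lambda)=q(x)\circ\lambda$ and trace-valued $(\sigma,\varepsilon)$-sesquilinear $f$ ($f(x\lambda,y\mu)=\lambda^\sigma f(x,y)\mu$, $f(y,x)=f(x,y)^\sigma\varepsilon$, $f(x,x)\in\{t+t^\sigma\varepsilon\}$) with $q(x+y)=q(x)+q(y)+(\overline{f(x,y)}+\overline R)$. Non-trivial: not identically $\overline R$.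 $P_q$: points $[x]$ with $q(x)=\overline R$. $[U]$: set of projective points of $U$. $\mathrm{Rad}(f)=\{x:f(x,V)=0\}$, $\mathrm{Rad}(q)=\{x\in\mathrm{Rad}(f):q(x)=\overline R\}$. *)

theory Defs
  imports Main
begin

definition anti_automorphism :: "('k::division_ring \<Rightarrow> 'k) \<Rightarrow> bool" where
  "anti_automorphism \<sigma> \<longleftrightarrow> bij \<sigma> \<and> (\<forall>a b. \<sigma> (a + b) = \<sigma> a + \<sigma> b) \<and> (\<forall>a b. \<sigma> (a * b) = \<sigma> b * \<sigma> a)"

definition admissible_pair :: "('k::division_ring \<Rightarrow> 'k) \<Rightarrow> 'k \<Rightarrow> bool" where
  "admissible_pair \<sigma> \<epsilon> \<longleftrightarrow> anti_automorphism \<sigma> \<and> \<sigma> \<epsilon> * \<epsilon> = 1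
     \<and> (\<forall>t. \<sigma> (\<sigma> t) = \<epsilon> * t * inverse \<epsilon>)"

definition trace_sub :: "('k::division_ring \<Rightarrow> 'k) \<Rightarrow> 'k \<Rightarrow> 'k set" where
  "trace_sub \<sigma> \<epsilon> = {t - \<sigma> t * \<epsilon> | t. True}"

definition kbar :: "('k::division_ring \<Rightarrow> 'k) \<Rightarrow> 'k \<Rightarrow> 'k \<Rightarrow> 'k set" where
  "kbar \<sigma> \<epsilon> t = (\<lambda>s. t + s) ` trace_sub \<sigma> \<epsilon>"

definition Kbar :: "('k::division_ring \<Rightarrow> 'k) \<Rightarrow> 'k \<Rightarrow> 'k set set" where
  "Kbar \<sigma> \<epsilon> = range (kbar \<sigma> \<epsilon>)"

text \<open>Addition of cosets (elements of Kbar).\<close>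
definition setplus :: "'k::plus set \<Rightarrow> 'k set \<Rightarrow> 'k set" where
  "setplus A B = {a + b | a b. a \<in> A \<and> b \<in> B}"

text \<open>Addition of cosets of a subgroup of Kbar (elements of Kbar / Rbar).\<close>
definition ssetplus :: "'k::plus set set \<Rightarrow> 'k set set \<Rightarrow> 'k set set" where
  "ssetplus X Y = {setplus A B | A B. A \<in> X \<and> B \<in> Y}"

definition kcirc :: "('k::division_ring \<Rightarrow> 'k) \<Rightarrow> 'k \<Rightarrow> 'k set \<Rightarrow> 'k \<Rightarrow> 'k set" where
  "kcirc \<sigma> \<epsilon> A l = (\<Union>a\<in>A. kbar \<sigma> \<epsilon> (\<sigma> l * a * l))"

definition closed_subgroup :: "('k::division_ring \<Rightarrow> 'k) \<Rightarrow> 'k \<Rightarrow> 'k set set \<Rightarrow> bool" where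
  "closed_subgroup \<sigma> \<epsilon> R \<longleftrightarrow> R \<subseteq> Kbar \<sigma> \<epsilon> \<and> kbar \<sigma> \<epsilon> 0 \<in> R
     \<and> (\<forall>A\<in>R. \<forall>B\<in>R. setplus A B \<in> R) \<and> (\<forall>A\<in>R. uminus ` A \<in> R)
     \<and> (\<forall>A\<in>R. \<forall>l. kcirc \<sigma> \<epsilon> A l \<in> R)"

text \<open>The coset tbar + Rbar in Kbar/Rbar.\<close>
definition qcoset :: "'k::division_ring set \<Rightarrow> 'k set set \<Rightarrow> 'k set set" where
  "qcoset A R = ssetplus {A} R"

definition KbarR :: "('k::division_ring \<Rightarrow> 'k) \<Rightarrow> 'k \<Rightarrow> 'k set set \<Rightarrow> 'k set set set" where
  "KbarR \<sigma> \<epsilon> R = {qcoset A R | A. A \<in> Kbar \<sigma> \<epsilon>}"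

definition qcirc :: "('k::division_ring \<Rightarrow> 'k) \<Rightarrow> 'k \<Rightarrow> 'k set set \<Rightarrow> 'k set set \<Rightarrow> 'k \<Rightarrow> 'k set set" where
  "qcirc \<sigma> \<epsilon> R X l = (\<Union>A\<in>X. qcoset (kcirc \<sigma> \<epsilon> A l) R)"

definition right_vector_space :: "('v::ab_group_add \<Rightarrow> 'k::division_ring \<Rightarrow> 'v) \<Rightarrow> bool" where
  "right_vector_space smul \<longleftrightarrow>
     (\<forall>x. smul x 1 = x) \<and> (\<forall>x a b. smul x (a * b) = smul (smul x a) b)
     \<and> (\<forall>x y a. smul (x + y) a = smul x a + smul y a)
     \<and> (\<forall>x a b. smul x (a + b) = smul x a + smul x b)"

definition subspace :: "('v::ab_group_add \<Rightarrow> 'k::division_ring \<Rightarrow> 'v) \<Rightarrow> 'v set \<Rightarrow> bool" where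
  "subspace smul U \<longleftrightarrow> 0 \<in> U \<and> (\<forall>x\<in>U. \<forall>y\<in>U. x + y \<in> U) \<and> (\<forall>x\<in>U. \<forall>a. smul x a \<in> U)"

definition rspan :: "('v::ab_group_add \<Rightarrow> 'k::division_ring \<Rightarrow> 'v) \<Rightarrow> 'v set \<Rightarrow> 'v set" where
  "rspan smul S = \<Inter>{W. subspace smul W \<and> S \<subseteq> W}"

text \<open>Projective point [x] (x nonzero): the 1-dimensional subspace xK.\<close>
definition ppoint :: "('v::ab_group_add \<Rightarrow> 'k::division_ring \<Rightarrow> 'v) \<Rightarrow> 'v \<Rightarrow> 'v set" where
  "ppoint smul x = range (smul x)"

definition ppoints :: "('v::ab_group_add \<Rightarrow> 'k::division_ring \<Rightarrow> 'v) \<Rightarrow> 'v set \<Rightarrow> 'v set set" where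
  "ppoints smul U = {ppoint smul x | x. x \<in> U \<and> x \<noteq> 0}"

definition is_line :: "('v::ab_group_add \<Rightarrow> 'k::division_ring \<Rightarrow> 'v) \<Rightarrow> 'v set \<Rightarrow> bool" where
  "is_line smul L \<longleftrightarrow> (\<exists>x y. (\<forall>a b. smul x a + smul y b = 0 \<longrightarrow> a = 0 \<and> b = 0)
       \<and> L = {smul x a + smul y b | a b. True})"

definition trace_valued_sesquilinear ::
  "('k::division_ring \<Rightarrow> 'k) \<Rightarrow> 'k \<Rightarrow> ('v::ab_group_add \<Rightarrow> 'k \<Rightarrow> 'v) \<Rightarrow> ('v \<Rightarrow> 'v \<Rightarrow> 'k) \<Rightarrow> bool" where
  "trace_valued_sesquilinear \<sigma> \<epsilon> smul f \<longleftrightarrow>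
     (\<forall>x y z. f (x + y) z = f x z + f y z) \<and> (\<forall>x y z. f x (y + z) = f x y + f x z)
     \<and> (\<forall>x y a b. f (smul x a) (smul y b) = \<sigma> a * f x y * b)
     \<and> (\<forall>x y. f y x = \<sigma> (f x y) * \<epsilon>)
     \<and> (\<forall>x. \<exists>t. f x x = t + \<sigma> t * \<epsilon>)"

definition gen_quadratic_form ::
  "('k::division_ring \<Rightarrow> 'k) \<Rightarrow> 'k \<Rightarrow> ('v::ab_group_add \<Rightarrow> 'k \<Rightarrow> 'v) \<Rightarrow> 'k set set
     \<Rightarrow> ('v \<Rightarrow> 'k set set) \<Rightarrow> ('v \<Rightarrow> 'v \<Rightarrow> 'k) \<Rightarrow> bool" where
  "gen_quadratic_form \<sigma> \<epsilon> smul R q f \<longleftrightarrow>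
     (\<forall>x. q x \<in> KbarR \<sigma> \<epsilon> R)
     \<and> (\<forall>x l. q (smul x l) = qcirc \<sigma> \<epsilon> R (q x) l)
     \<and> trace_valued_sesquilinear \<sigma> \<epsilon> smul f
     \<and> (\<forall>x y. q (x + y) = ssetplus (ssetplus (q x) (q y)) (qcoset (kbar \<sigma> \<epsilon> (f x y)) R))"

definition Pq :: "('v::ab_group_add \<Rightarrow> 'k::division_ring \<Rightarrow> 'v) \<Rightarrow> 'k set set \<Rightarrow> ('v \<Rightarrow> 'k set set) \<Rightarrow> 'v set set" where
  "Pq smul R q = {ppoint smul x | x. x \<noteq> 0 \<and> q x = R}"

definition Rad_f :: "('v \<Rightarrow> 'v \<Rightarrow> 'k::zero) \<Rightarrow> 'v set" where
  "Rad_f f = {x. \<forall>y. f x y = 0}"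

definition Rad_q :: "('v \<Rightarrow> 'v \<Rightarrow> 'k::zero) \<Rightarrow> 'k set set \<Rightarrow> ('v \<Rightarrow> 'k set set) \<Rightarrow> 'v set" where
  "Rad_q f R q = {x \<in> Rad_f f. q x = R}"

end

theory Submission
  imports Defs
begin

text \<open>
  Modulo the preimage \<open>R\<^sub>0\<close> of \<open>\<overline>R\<close> in \<open>K\<close>, the form \<open>q\<close> lifts to a map \<open>g : V \<rightarrow> K\<close> with
  \<open>g(x\<lambda>) \<equiv> \<lambda>\<^sup>\<sigma> g(x) \<lambda>\<close> and \<open>g(x + y) \<equiv> g(x) + g(y) + f(x, y)\<close>, and \<open>[x]\<close> is singular iff \<open>g(x) \<in> R\<^sub>0\<close>.
  If \<open>U \<subseteq> Rad(f)\<close> contains no singular vector, a line through two singular points \<open>[z\<^sub>1], [z\<^sub>2]\<close>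
  cannot meet \<open>U\<close> in a point \<open>[w]\<close>: writing \<open>z\<^sub>1 = z\<^sub>2 b + w d\<close>, orthogonality of \<open>w\<close> gives
  \<open>g(z\<^sub>1) \<equiv> b\<^sup>\<sigma> g(z\<^sub>2) b + d\<^sup>\<sigma> g(w) d\<close>, forcing \<open>d = 0\<close> and hence \<open>[z\<^sub>1] = [z\<^sub>2]\<close>.
  Conversely, if \<open>u \<in> U\<close> is not in \<open>Rad(f)\<close>, then since the singular points span \<open>V\<close> some singular
  \<open>x\<close> has \<open>f(u, x) \<noteq> 0\<close>, and \<open>u + x\<lambda>\<close> is singular for \<open>\<lambda> = -f(u, x)\<^sup>-\<^sup>1 g(u)\<close>; so the line
  \<open>\<langle>u, x\<rangle>\<close> carries two singular points and meets \<open>U\<close>.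
\<close>

definition secant :: "('v::ab_group_add \<Rightarrow> 'k::division_ring \<Rightarrow> 'v) \<Rightarrow> 'v set set \<Rightarrow> 'v set \<Rightarrow> bool"
  where "secant smul P L \<longleftrightarrow> is_line smul L \<and> (\<exists>p1 p2. p1 \<noteq> p2 \<and> p1 \<in> P \<and> p2 \<in> P
    \<and> p1 \<in> ppoints smul L \<and> p2 \<in> ppoints smul L)"

definition defines_quotient ::
  "('v::ab_group_add \<Rightarrow> 'k::division_ring \<Rightarrow> 'v) \<Rightarrow> 'v set set \<Rightarrow> 'v set \<Rightarrow> bool"
  where "defines_quotient smul P U \<longleftrightarrow> ppoints smul U \<inter> P = {}
    \<and> (\<forall>L. secant smul P L \<longrightarrow> ppoints smul U \<inter> ppoints smul L = {})"

section \<open>The groups \<open>\<overline>K\<close> and \<open>\<overline>K / \<overline>R\<close>\<close>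

locale admissible =
  fixes \<sigma> :: "'a::division_ring \<Rightarrow> 'a" and \<epsilon> :: 'a
  assumes admissible: "admissible_pair \<sigma> \<epsilon>"
begin

lemma sigma_add: "\<sigma> (a + b) = \<sigma> a + \<sigma> b"
  using admissible unfolding admissible_pair_def anti_automorphism_def by blast

lemma sigma_mult: "\<sigma> (a * b) = \<sigma> b * \<sigma> a"
  using admissible unfolding admissible_pair_def anti_automorphism_def by blast

lemma inj_sigma: "inj \<sigma>"
  using admissible unfolding admissible_pair_def anti_automorphism_def bij_def by blast

lemma sigma_sigma: "\<sigma> (\<sigma> t) = \<epsilon> * t * inverse \<epsilon>"
  using admissible unfolding admissible_pair_def by blast

lemma eps_nonzero: "\<epsilon> \<noteq> 0"
  using admissible unfolding admissible_pair_def by auto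

lemma sigma_zero: "\<sigma> 0 = 0"
  using sigma_add[of 0 0] by simp

lemma sigma_minus: "\<sigma> (- a) = - \<sigma> a"
  using sigma_add[of "- a" a] sigma_zero by (simp add: eq_neg_iff_add_eq_0)

lemma sigma_one: "\<sigma> 1 = 1"
proof -
  have "\<sigma> 1 \<noteq> 0"
    using inj_sigma sigma_zero by (metis injD zero_neq_one)
  moreover have "\<sigma> 1 * 1 = \<sigma> 1 * \<sigma> 1"
    using sigma_mult[of 1 1] by simp
  ultimately show ?thesis
    by (metis mult_cancel_left)
qed

abbreviation "T \<equiv> trace_sub \<sigma> \<epsilon>"

lemma trace_sub_iff: "t \<in> T \<longleftrightarrow> (\<exists>s. t = s - \<sigma> s * \<epsilon>)"
  unfolding trace_sub_def by blast

lemma trace_sub_zero: "0 \<in> T"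
  unfolding trace_sub_iff by (rule exI[of _ 0]) (simp add: sigma_zero)

lemma trace_sub_add: "a \<in> T \<Longrightarrow> b \<in> T \<Longrightarrow> a + b \<in> T"
proof -
  assume "a \<in> T" "b \<in> T"
  then obtain s t where a: "a = s - \<sigma> s * \<epsilon>" and b: "b = t - \<sigma> t * \<epsilon>"
    unfolding trace_sub_iff by blast
  have "a + b = (s + t) - \<sigma> (s + t) * \<epsilon>"
    unfolding a b sigma_add by (simp add: algebra_simps)
  then show ?thesis
    unfolding trace_sub_iff by blast
qed

lemma trace_sub_minus: "a \<in> T \<Longrightarrow> - a \<in> T"
  unfolding trace_sub_iff by (metis sigma_minus minus_diff_eq minus_mult_left diff_minus_eq_add
      add.commute diff_conv_add_uminus)

lemma trace_sub_circ: "a \<in> T \<Longrightarrow> \<sigma> l * a * l \<in> T"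
proof -
  assume "a \<in> T"
  then obtain s where s: "a = s - \<sigma> s * \<epsilon>"
    unfolding trace_sub_iff by blast
  define u where "u = \<sigma> l * s * l"
  have "\<sigma> u = \<sigma> l * \<sigma> s * (\<epsilon> * l * inverse \<epsilon>)"
    unfolding u_def by (simp add: sigma_mult sigma_sigma mult.assoc)
  then have "\<sigma> u * \<epsilon> = \<sigma> l * \<sigma> s * \<epsilon> * l"
    using eps_nonzero by (simp add: mult.assoc)
  then have "\<sigma> l * a * l = u - \<sigma> u * \<epsilon>"
    unfolding s u_def by (simp add: algebra_simps)
  then show ?thesis
    unfolding trace_sub_iff by blast
qed

lemma kbar_eq_Collect: "kbar \<sigma> \<epsilon> a = {c. c - a \<in> T}"
  unfolding kbar_def by (force simp: algebra_simps)

lemma kbar_eq_iff: "kbar \<sigma> \<epsilon> a = kbar \<sigma> \<epsilon> b \<longleftrightarrow> a - b \<in> T"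
proof
  assume "kbar \<sigma> \<epsilon> a = kbar \<sigma> \<epsilon> b"
  moreover have "a \<in> kbar \<sigma> \<epsilon> a"
    unfolding kbar_eq_Collect using trace_sub_zero by simp
  ultimately show "a - b \<in> T"
    unfolding kbar_eq_Collect by auto
next
  assume ab: "a - b \<in> T"
  have "c - a \<in> T \<longleftrightarrow> c - b \<in> T" for c
    using trace_sub_add[OF _ ab, of "c - a"] trace_sub_add[OF _ trace_sub_minus[OF ab], of "c - b"]
    by (auto simp: algebra_simps)
  then show "kbar \<sigma> \<epsilon> a = kbar \<sigma> \<epsilon> b"
    unfolding kbar_eq_Collect by blast
qed

lemma setplus_kbar: "setplus (kbar \<sigma> \<epsilon> a) (kbar \<sigma> \<epsilon> b) = kbar \<sigma> \<epsilon> (a + b)"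
proof (rule set_eqI, rule iffI)
  fix e assume "e \<in> setplus (kbar \<sigma> \<epsilon> a) (kbar \<sigma> \<epsilon> b)"
  then obtain c d where "e = c + d" "c - a \<in> T" "d - b \<in> T"
    unfolding setplus_def kbar_eq_Collect by blast
  moreover have "(c + d) - (a + b) = (c - a) + (d - b)"
    by (simp add: algebra_simps)
  ultimately show "e \<in> kbar \<sigma> \<epsilon> (a + b)"
    unfolding kbar_eq_Collect using trace_sub_add by (metis mem_Collect_eq)
next
  fix e assume "e \<in> kbar \<sigma> \<epsilon> (a + b)"
  then have "(e - b) - a \<in> T" "b - b \<in> T"
    unfolding kbar_eq_Collect using trace_sub_zero by (simp_all add: algebra_simps)
  moreover have "e = (e - b) + b"
    by simp
  ultimately show "e \<in> setplus (kbar \<sigma> \<epsilon> a) (kbar \<sigma> \<epsilon> b)"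
    unfolding setplus_def kbar_eq_Collect by blast
qed

lemma uminus_kbar: "uminus ` kbar \<sigma> \<epsilon> a = kbar \<sigma> \<epsilon> (- a)"
proof (rule set_eqI, rule iffI)
  fix e assume "e \<in> uminus ` kbar \<sigma> \<epsilon> a"
  then obtain c where "e = - c" "c - a \<in> T"
    unfolding kbar_eq_Collect by blast
  then show "e \<in> kbar \<sigma> \<epsilon> (- a)"
    unfolding kbar_eq_Collect using trace_sub_minus[of "c - a"] by (simp add: algebra_simps)
next
  fix e assume "e \<in> kbar \<sigma> \<epsilon> (- a)"
  then have "e + a \<in> T"
    unfolding kbar_eq_Collect by simp
  then have "- (e + a) \<in> T"
    by (rule trace_sub_minus)
  then have "(- e) - a \<in> T"
    by (metis minus_add_distrib diff_conv_add_uminus)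
  then show "e \<in> uminus ` kbar \<sigma> \<epsilon> a"
    unfolding kbar_eq_Collect by (auto intro!: image_eqI[of _ _ "- e"])
qed

lemma kcirc_kbar: "kcirc \<sigma> \<epsilon> (kbar \<sigma> \<epsilon> a) l = kbar \<sigma> \<epsilon> (\<sigma> l * a * l)"
proof -
  have "kbar \<sigma> \<epsilon> (\<sigma> l * c * l) = kbar \<sigma> \<epsilon> (\<sigma> l * a * l)" if "c \<in> kbar \<sigma> \<epsilon> a" for c
  proof -
    have "\<sigma> l * (c - a) * l \<in> T"
      using that trace_sub_circ unfolding kbar_eq_Collect by blast
    then show ?thesis
      unfolding kbar_eq_iff by (simp add: algebra_simps)
  qed
  moreover have "a \<in> kbar \<sigma> \<epsilon> a"
    unfolding kbar_eq_Collect using trace_sub_zero by simp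
  ultimately show ?thesis
    unfolding kcirc_def by blast
qed

end

locale closed_quotient = admissible +
  fixes R :: "'a set set"
  assumes closed: "closed_subgroup \<sigma> \<epsilon> R"
begin

definition R_lift :: "'a set"
  where "R_lift = {t. kbar \<sigma> \<epsilon> t \<in> R}"

lemma R_eq_image_R_lift: "R = kbar \<sigma> \<epsilon> ` R_lift"
proof -
  have "R \<subseteq> range (kbar \<sigma> \<epsilon>)"
    using closed unfolding closed_subgroup_def Kbar_def by blast
  then show ?thesis
    unfolding R_lift_def by blast
qed

lemma R_lift_zero: "0 \<in> R_lift"
  using closed unfolding closed_subgroup_def R_lift_def by blast

lemma R_lift_add: "a \<in> R_lift \<Longrightarrow> b \<in> R_lift \<Longrightarrow> a + b \<in> R_lift"
  using closed setplus_kbar unfolding closed_subgroup_def R_lift_def by fastforce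

lemma R_lift_minus: "a \<in> R_lift \<Longrightarrow> - a \<in> R_lift"
  using closed uminus_kbar unfolding closed_subgroup_def R_lift_def by fastforce

lemma R_lift_circ: "a \<in> R_lift \<Longrightarrow> \<sigma> l * a * l \<in> R_lift"
  using closed kcirc_kbar unfolding closed_subgroup_def R_lift_def by fastforce

lemma trace_sub_imp_R_lift: "t \<in> T \<Longrightarrow> t \<in> R_lift"
  using R_lift_zero kbar_eq_iff[of t 0] unfolding R_lift_def by simp

abbreviation "qclass a \<equiv> qcoset (kbar \<sigma> \<epsilon> a) R"

lemma qclass_eq_image: "qclass a = kbar \<sigma> \<epsilon> ` {c. c - a \<in> R_lift}"
proof (rule set_eqI, rule iffI)
  fix X assume "X \<in> qclass a"
  then obtain B where "B \<in> R" "X = setplus (kbar \<sigma> \<epsilon> a) B"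
    unfolding qcoset_def ssetplus_def by blast
  moreover obtain r where "r \<in> R_lift" "B = kbar \<sigma> \<epsilon> r"
    using \<open>B \<in> R\<close> R_eq_image_R_lift by blast
  ultimately show "X \<in> kbar \<sigma> \<epsilon> ` {c. c - a \<in> R_lift}"
    by (force simp: setplus_kbar)
next
  fix X assume "X \<in> kbar \<sigma> \<epsilon> ` {c. c - a \<in> R_lift}"
  then obtain c where c: "c - a \<in> R_lift" "X = kbar \<sigma> \<epsilon> c"
    by blast
  then have "X = setplus (kbar \<sigma> \<epsilon> a) (kbar \<sigma> \<epsilon> (c - a))" "kbar \<sigma> \<epsilon> (c - a) \<in> R"
    unfolding R_lift_def by (simp_all add: setplus_kbar)
  then show "X \<in> qclass a"
    unfolding qcoset_def ssetplus_def by blast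
qed

lemma R_lift_translate:
  assumes "a - b \<in> R_lift"
  shows "c - a \<in> R_lift \<longleftrightarrow> c - b \<in> R_lift"
  using R_lift_add[OF _ assms, of "c - a"] R_lift_add[OF _ R_lift_minus[OF assms], of "c - b"]
  by (auto simp: algebra_simps)

lemma qclass_eq_iff: "qclass a = qclass b \<longleftrightarrow> a - b \<in> R_lift"
proof
  assume "qclass a = qclass b"
  moreover have "kbar \<sigma> \<epsilon> a \<in> qclass a"
    unfolding qclass_eq_image using R_lift_zero by simp
  ultimately obtain c where c: "c - b \<in> R_lift" "kbar \<sigma> \<epsilon> a = kbar \<sigma> \<epsilon> c"
    unfolding qclass_eq_image by auto
  then have "(a - c) + (c - b) \<in> R_lift"
    using R_lift_add kbar_eq_iff trace_sub_imp_R_lift by blast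
  then show "a - b \<in> R_lift"
    by simp
next
  assume "a - b \<in> R_lift"
  then show "qclass a = qclass b"
    unfolding qclass_eq_image using R_lift_translate by simp
qed

lemma qclass_eq_R_iff: "qclass a = R \<longleftrightarrow> a \<in> R_lift"
proof -
  have "qclass 0 = R"
    unfolding qclass_eq_image by (simp add: R_eq_image_R_lift[symmetric])
  then show ?thesis
    using qclass_eq_iff[of a 0] by simp
qed

lemma ssetplus_qclass: "ssetplus (qclass a) (qclass b) = qclass (a + b)"
proof (rule set_eqI, rule iffI)
  fix X assume "X \<in> ssetplus (qclass a) (qclass b)"
  then obtain c d where X: "X = kbar \<sigma> \<epsilon> (c + d)" and cd: "c - a \<in> R_lift" "d - b \<in> R_lift"
    unfolding ssetplus_def qclass_eq_image by (auto simp: setplus_kbar)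
  have "(c + d) - (a + b) = (c - a) + (d - b)"
    by (simp add: algebra_simps)
  then have "(c + d) - (a + b) \<in> R_lift"
    using R_lift_add[OF cd] by (simp only:)
  then show "X \<in> qclass (a + b)"
    unfolding qclass_eq_image X by blast
next
  fix X assume "X \<in> qclass (a + b)"
  then obtain e where "X = kbar \<sigma> \<epsilon> e" "(e - b) - a \<in> R_lift"
    unfolding qclass_eq_image by (auto simp: algebra_simps)
  moreover have "X = setplus (kbar \<sigma> \<epsilon> (e - b)) (kbar \<sigma> \<epsilon> b)" if "X = kbar \<sigma> \<epsilon> e"
    using that by (simp add: setplus_kbar)
  moreover have "b - b \<in> R_lift"
    using R_lift_zero by simp
  ultimately show "X \<in> ssetplus (qclass a) (qclass b)"
    unfolding ssetplus_def qclass_eq_image by blast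
qed

lemma qcirc_qclass: "qcirc \<sigma> \<epsilon> R (qclass a) l = qclass (\<sigma> l * a * l)"
proof -
  have "qclass (\<sigma> l * c * l) = qclass (\<sigma> l * a * l)" if "c - a \<in> R_lift" for c
  proof -
    have "\<sigma> l * (c - a) * l \<in> R_lift"
      using that by (rule R_lift_circ)
    then show ?thesis
      unfolding qclass_eq_iff by (simp add: algebra_simps)
  qed
  moreover have "a \<in> {c. c - a \<in> R_lift}"
    using R_lift_zero by simp
  moreover have "qcirc \<sigma> \<epsilon> R (qclass a) l = (\<Union>c\<in>{c. c - a \<in> R_lift}. qclass (\<sigma> l * c * l))"
    unfolding qcirc_def qclass_eq_image[of a] by (simp add: kcirc_kbar)
  ultimately show ?thesis
    by blast
qed

lemma gen_quadratic_form_lift: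
  assumes "gen_quadratic_form \<sigma> \<epsilon> smul R q f"
  obtains g where "\<And>x. q x = qclass (g x)"
    and "\<And>x l. g (smul x l) - \<sigma> l * g x * l \<in> R_lift"
    and "\<And>x y. g (x + y) - (g x + g y + f x y) \<in> R_lift"
proof -
  have "\<exists>a. q x = qclass a" for x
    using assms unfolding gen_quadratic_form_def KbarR_def Kbar_def by blast
  then obtain g where q: "\<And>x. q x = qclass (g x)"
    by metis
  have q_smul: "q (smul x l) = qcirc \<sigma> \<epsilon> R (q x) l"
    and q_add: "q (x + y) = ssetplus (ssetplus (q x) (q y)) (qclass (f x y))" for x y l
    using assms unfolding gen_quadratic_form_def by blast+
  have "g (smul x l) - \<sigma> l * g x * l \<in> R_lift" for x l
    using q_smul[of x l] unfolding q qcirc_qclass qclass_eq_iff .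
  moreover have "g (x + y) - (g x + g y + f x y) \<in> R_lift" for x y
    using q_add[of x y] unfolding q ssetplus_qclass qclass_eq_iff .
  ultimately show thesis
    using that q by blast
qed

end

section \<open>Linear algebra over a division ring\<close>

lemma exists_nontrivial_solution_1x2:
  "\<exists>x y. (x \<noteq> 0 \<or> y \<noteq> 0) \<and> p * x + q * y = (0::'k::division_ring)"
proof (cases "p = 0")
  case True
  then show ?thesis
    by (intro exI[of _ 1] exI[of _ 0]) simp
next
  case False
  then have "p * (- (inverse p * q)) + q * 1 = 0"
    by (simp add: mult.assoc[symmetric])
  then show ?thesis
    by (intro exI[of _ "- (inverse p * q)"] exI[of _ 1]) simp
qed

lemma exists_nontrivial_solution_2x3_pivot:
  fixes a1 a2 a3 b1 b2 b3 :: "'k::division_ring"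
  assumes "a1 \<noteq> 0"
  shows "\<exists>c1 c2 c3. (c1 \<noteq> 0 \<or> c2 \<noteq> 0 \<or> c3 \<noteq> 0)
    \<and> a1 * c1 + a2 * c2 + a3 * c3 = 0 \<and> b1 * c1 + b2 * c2 + b3 * c3 = 0"
proof -
  obtain x y where xy: "x \<noteq> 0 \<or> y \<noteq> 0"
    "(b2 - b1 * inverse a1 * a2) * x + (b3 - b1 * inverse a1 * a3) * y = 0"
    using exists_nontrivial_solution_1x2 by blast
  define c1 where "c1 = - (inverse a1 * (a2 * x + a3 * y))"
  have "a1 * c1 = - (a2 * x + a3 * y)"
    unfolding c1_def using assms by (simp add: mult.assoc[symmetric])
  then have "a1 * c1 + a2 * x + a3 * y = 0"
    by simp
  moreover have "b1 * c1 + b2 * x + b3 * y = 0"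
  proof -
    have b1c1: "b1 * c1 = - (b1 * inverse a1 * a2 * x + b1 * inverse a1 * a3 * y)"
      unfolding c1_def by (simp add: algebra_simps)
    show ?thesis
      using xy(2) unfolding b1c1 by (simp add: algebra_simps)
  qed
  ultimately show ?thesis
    using xy(1) by blast
qed

lemma exists_nontrivial_solution_2x3:
  fixes a1 a2 a3 b1 b2 b3 :: "'k::division_ring"
  shows "\<exists>c1 c2 c3. (c1 \<noteq> 0 \<or> c2 \<noteq> 0 \<or> c3 \<noteq> 0)
    \<and> a1 * c1 + a2 * c2 + a3 * c3 = 0 \<and> b1 * c1 + b2 * c2 + b3 * c3 = 0"
proof -
  consider "a1 \<noteq> 0" | "a2 \<noteq> 0" | "a3 \<noteq> 0" | "a1 = 0" "a2 = 0" "a3 = 0"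
    by blast
  then show ?thesis
  proof cases
    case 1
    then show ?thesis
      by (rule exists_nontrivial_solution_2x3_pivot)
  next
    case 2
    from exists_nontrivial_solution_2x3_pivot[OF 2, of a1 a3 b2 b1 b3] obtain c1 c2 c3
      where "c1 \<noteq> 0 \<or> c2 \<noteq> 0 \<or> c3 \<noteq> 0"
        "a2 * c1 + a1 * c2 + a3 * c3 = 0" "b2 * c1 + b1 * c2 + b3 * c3 = 0"
      by blast
    then show ?thesis
      by (intro exI[of _ c2] exI[of _ c1] exI[of _ c3]) (auto simp: algebra_simps)
  next
    case 3
    from exists_nontrivial_solution_2x3_pivot[OF 3, of a1 a2 b3 b1 b2] obtain c1 c2 c3
      where "c1 \<noteq> 0 \<or> c2 \<noteq> 0 \<or> c3 \<noteq> 0"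
        "a3 * c1 + a1 * c2 + a2 * c3 = 0" "b3 * c1 + b1 * c2 + b2 * c3 = 0"
      by blast
    then show ?thesis
      by (intro exI[of _ c2] exI[of _ c3] exI[of _ c1]) (auto simp: algebra_simps)
  next
    case 4
    from exists_nontrivial_solution_1x2[of b1 b2] obtain x y
      where "x \<noteq> 0 \<or> y \<noteq> 0" "b1 * x + b2 * y = 0"
      by blast
    with 4 show ?thesis
      by (intro exI[of _ x] exI[of _ y] exI[of _ 0]) auto
  qed
qed

locale right_space =
  fixes smul :: "'v::ab_group_add \<Rightarrow> 'k::division_ring \<Rightarrow> 'v"
  assumes right_vector_space: "right_vector_space smul"
begin

lemma smul_one: "smul x 1 = x"
  using right_vector_space unfolding right_vector_space_def by blast

lemma smul_smul: "smul (smul x a) b = smul x (a * b)"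
  using right_vector_space unfolding right_vector_space_def by metis

lemma smul_add_vector: "smul (x + y) a = smul x a + smul y a"
  using right_vector_space unfolding right_vector_space_def by blast

lemma smul_add_scalar: "smul x (a + b) = smul x a + smul x b"
  using right_vector_space unfolding right_vector_space_def by blast

lemma smul_zero_vector: "smul 0 a = 0"
  using smul_add_vector[of 0 0 a] by simp

lemma smul_zero_scalar: "smul x 0 = 0"
  using smul_add_scalar[of x 0 0] by simp

lemma smul_minus_scalar: "smul x (- a) = - smul x a"
  using smul_add_scalar[of x a "- a"] by (simp add: smul_zero_scalar eq_neg_iff_add_eq_0 add.commute)

lemma smul_minus_vector: "smul (- x) a = - smul x a"
  using smul_add_vector[of x "- x" a] by (simp add: smul_zero_vector eq_neg_iff_add_eq_0 add.commute)

lemma smul_diff_vector: "smul (x - y) a = smul x a - smul y a"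
  using smul_add_vector[of x "- y" a] by (simp add: smul_minus_vector)

lemma smul_diff_scalar: "smul x (a - b) = smul x a - smul x b"
  using smul_add_scalar[of x a "- b"] by (simp add: smul_minus_scalar)

lemma smul_eq_zero_vector: "smul x a = 0 \<Longrightarrow> a \<noteq> 0 \<Longrightarrow> x = 0"
  using smul_smul[of x a "inverse a"] by (simp add: smul_zero_vector smul_one)

lemma eq_smul_of_combination_eq_zero:
  assumes "smul a c1 + smul b c2 = 0" "c1 \<noteq> 0"
  shows "a = smul b (- (c2 * inverse c1))"
proof -
  have "smul a c1 = - smul b c2"
    using assms(1) by (simp add: eq_neg_iff_add_eq_0)
  then have "smul (smul a c1) (inverse c1) = smul (- smul b c2) (inverse c1)"
    by simp
  then show ?thesis
    using assms(2) by (simp add: smul_smul smul_one smul_minus_vector smul_minus_scalar)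
qed

lemma eq_smul_of_combination3_eq_zero:
  assumes "smul a c1 + smul b c2 + smul c c3 = 0" "c1 \<noteq> 0"
  shows "a = smul b (- (c2 * inverse c1)) + smul c (- (c3 * inverse c1))"
proof -
  have "smul a c1 + (smul b c2 + smul c c3) = 0"
    using assms(1) by (simp only: add.assoc)
  then have "smul a c1 = - (smul b c2 + smul c c3)"
    unfolding eq_neg_iff_add_eq_0 .
  then have "smul (smul a c1) (inverse c1) = smul (- (smul b c2 + smul c c3)) (inverse c1)"
    by simp
  then show ?thesis
    using assms(2)
    by (simp add: smul_smul smul_one smul_minus_vector smul_minus_scalar smul_diff_vector)
qed

lemma subspace_smul: "subspace smul U \<Longrightarrow> u \<in> U \<Longrightarrow> smul u c \<in> U"
  unfolding subspace_def by blast

lemma ppoint_self: "x \<in> ppoint smul x"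
  unfolding ppoint_def by (metis rangeI smul_one)

lemma ppoint_eqD: "ppoint smul x = ppoint smul y \<Longrightarrow> \<exists>c. x = smul y c"
  using ppoint_self[of x] unfolding ppoint_def by auto

lemma ppoint_smul: "c \<noteq> 0 \<Longrightarrow> ppoint smul (smul x c) = ppoint smul x"
proof -
  assume c: "c \<noteq> 0"
  have "smul x a = smul x (c * (inverse c * a))" for a
    using c by (simp add: mult.assoc[symmetric])
  then have "range (\<lambda>a. smul x (c * a)) = range (smul x)"
    by blast
  then show ?thesis
    unfolding ppoint_def by (simp add: smul_smul)
qed

lemma ppoint_eq_of_eq_smul: "z = smul z' b \<Longrightarrow> z \<noteq> 0 \<Longrightarrow> ppoint smul z = ppoint smul z'"
  using ppoint_smul smul_zero_scalar by metis

lemma line_three_dependent: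
  assumes "is_line smul L" "z1 \<in> L" "z2 \<in> L" "z3 \<in> L"
  obtains c1 c2 c3 where "c1 \<noteq> 0 \<or> c2 \<noteq> 0 \<or> c3 \<noteq> 0"
    and "smul z1 c1 + smul z2 c2 + smul z3 c3 = 0"
proof -
  obtain x y where L: "L = {smul x a + smul y b | a b. True}"
    using assms(1) unfolding is_line_def by blast
  obtain a1 b1 a2 b2 a3 b3 where z: "z1 = smul x a1 + smul y b1"
    "z2 = smul x a2 + smul y b2" "z3 = smul x a3 + smul y b3"
    using assms(2-4) unfolding L by blast
  obtain c1 c2 c3 where c: "c1 \<noteq> 0 \<or> c2 \<noteq> 0 \<or> c3 \<noteq> 0"
    "a1 * c1 + a2 * c2 + a3 * c3 = 0" "b1 * c1 + b2 * c2 + b3 * c3 = 0"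
    using exists_nontrivial_solution_2x3 by blast
  have "smul z1 c1 + smul z2 c2 + smul z3 c3
      = smul x (a1 * c1 + a2 * c2 + a3 * c3) + smul y (b1 * c1 + b2 * c2 + b3 * c3)"
    unfolding z smul_add_vector smul_smul smul_add_scalar by (simp add: algebra_simps)
  with c that show ?thesis
    by (simp add: smul_zero_scalar)
qed

end

section \<open>Quadratic forms lifted to the division ring\<close>

locale lifted_quadratic_form = right_space smul
  for smul :: "'v::ab_group_add \<Rightarrow> 'k::division_ring \<Rightarrow> 'v" +
  fixes \<sigma> :: "'k \<Rightarrow> 'k" and \<epsilon> :: 'k and f :: "'v \<Rightarrow> 'v \<Rightarrow> 'k"
    and g :: "'v \<Rightarrow> 'k" and R0 :: "'k set"
  assumes sigma_mult: "\<sigma> (a * b) = \<sigma> b * \<sigma> a"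
    and sigma_one: "\<sigma> 1 = 1"
    and sigma_zero: "\<sigma> 0 = 0"
    and sesquilinear: "trace_valued_sesquilinear \<sigma> \<epsilon> smul f"
    and R0_zero: "0 \<in> R0"
    and R0_add: "\<And>a b. a \<in> R0 \<Longrightarrow> b \<in> R0 \<Longrightarrow> a + b \<in> R0"
    and R0_minus: "\<And>a. a \<in> R0 \<Longrightarrow> - a \<in> R0"
    and R0_circ: "\<And>a l. a \<in> R0 \<Longrightarrow> \<sigma> l * a * l \<in> R0"
    and g_smul: "\<And>x l. g (smul x l) - \<sigma> l * g x * l \<in> R0"
    and g_add: "\<And>x y. g (x + y) - (g x + g y + f x y) \<in> R0"
begin

definition singular_points :: "'v set set"
  where "singular_points = {ppoint smul x | x. x \<noteq> 0 \<and> g x \<in> R0}"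

definition singular_radical :: "'v set"
  where "singular_radical = {x \<in> Rad_f f. g x \<in> R0}"

lemma R0_diff: "a \<in> R0 \<Longrightarrow> b \<in> R0 \<Longrightarrow> a - b \<in> R0"
  using R0_add R0_minus by (metis diff_conv_add_uminus)

lemma R0_circ_cancel: "\<sigma> c * a * c \<in> R0 \<Longrightarrow> c \<noteq> 0 \<Longrightarrow> a \<in> R0"
proof -
  assume h: "\<sigma> c * a * c \<in> R0" "c \<noteq> 0"
  have "\<sigma> (inverse c) * \<sigma> c = 1"
    using sigma_mult[of c "inverse c"] h(2) sigma_one by simp
  then have "\<sigma> (inverse c) * (\<sigma> c * a * c) * inverse c = a"
    using h(2) by (simp add: mult.assoc[symmetric]) (simp add: mult.assoc)
  then show ?thesis
    using R0_circ[OF h(1), of "inverse c"] by simp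
qed

lemma f_add_right: "f x (y + z) = f x y + f x z"
  using sesquilinear unfolding trace_valued_sesquilinear_def by blast

lemma f_smul: "f (smul x a) (smul y b) = \<sigma> a * f x y * b"
  using sesquilinear unfolding trace_valued_sesquilinear_def by blast

lemma f_sym: "f y x = \<sigma> (f x y) * \<epsilon>"
  using sesquilinear unfolding trace_valued_sesquilinear_def by blast

lemma f_zero_left: "f 0 y = 0"
  using sesquilinear unfolding trace_valued_sesquilinear_def
  by (metis add_cancel_left_left add_0)

lemma f_zero_right: "f x 0 = 0"
  using f_add_right[of x 0 0] by simp

lemma f_smul_right: "f x (smul y b) = f x y * b"
  using f_smul[of x 1 y b] by (simp add: smul_one sigma_one)

lemma Rad_f_orthogonal: "x \<in> Rad_f f \<Longrightarrow> f y x = 0"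
  unfolding Rad_f_def using f_sym[of y x] sigma_zero by simp

lemma g_zero: "g 0 \<in> R0"
  using g_add[of 0 0] R0_minus by (fastforce simp: f_zero_left)

lemma singular_smul: "g x \<in> R0 \<Longrightarrow> g (smul x l) \<in> R0"
proof -
  assume "g x \<in> R0"
  then have "(g (smul x l) - \<sigma> l * g x * l) + \<sigma> l * g x * l \<in> R0"
    using R0_add g_smul R0_circ by blast
  then show ?thesis
    by simp
qed

lemma singular_of_ppoint_eq: "ppoint smul s = ppoint smul z \<Longrightarrow> g s \<in> R0 \<Longrightarrow> g z \<in> R0"
  using ppoint_eqD singular_smul by metis

lemma singular_plus_radical:
  assumes "g z \<in> R0" "g z' \<in> R0" "w \<in> Rad_f f" "z = smul z' b + smul w d"
  shows "d = 0 \<or> g w \<in> R0"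
proof -
  define A B where "A = smul z' b" and "B = smul w d"
  have "f A B = 0"
    unfolding A_def B_def f_smul using Rad_f_orthogonal[OF assms(3)] by simp
  then have "\<sigma> d * g w * d
      = (g z - (g (A + B) - (g A + g B + f A B))) - g A - (g B - \<sigma> d * g w * d)"
    using assms(4) unfolding A_def B_def by (simp add: algebra_simps)
  also have "\<dots> \<in> R0"
    unfolding A_def B_def
    by (intro R0_diff R0_add R0_minus g_add g_smul singular_smul assms(1,2))
  finally show ?thesis
    using R0_circ_cancel by blast
qed

lemma radical_point_on_secant_singular:
  assumes L: "is_line smul L"
    and z1: "z1 \<in> L" "z1 \<noteq> 0" "g z1 \<in> R0" and z2: "z2 \<in> L" "z2 \<noteq> 0" "g z2 \<in> R0"
    and z12: "ppoint smul z1 \<noteq> ppoint smul z2"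
    and w: "w \<in> L" "w \<noteq> 0" "w \<in> Rad_f f"
  shows "g w \<in> R0"
proof -
  have pivot: "g w \<in> R0"
    if "g z \<in> R0" "g z' \<in> R0" "z \<noteq> 0" "ppoint smul z \<noteq> ppoint smul z'"
      and "smul z c + smul z' c' + smul w c3 = 0" "c \<noteq> 0"
    for z z' c c' c3
  proof -
    have z: "z = smul z' (- (c' * inverse c)) + smul w (- (c3 * inverse c))"
      using eq_smul_of_combination3_eq_zero that(5,6) .
    show ?thesis
    proof (rule ccontr)
      assume "g w \<notin> R0"
      then have "- (c3 * inverse c) = 0"
        using singular_plus_radical[OF that(1,2) w(3) z] by blast
      then have "z = smul z' (- (c' * inverse c))"
        using z by (simp only: smul_zero_scalar add_0_right)
      then show False
        using ppoint_eq_of_eq_smul that(3,4) by blast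
    qed
  qed
  obtain c1 c2 c3 where c: "c1 \<noteq> 0 \<or> c2 \<noteq> 0 \<or> c3 \<noteq> 0"
    and comb: "smul z1 c1 + smul z2 c2 + smul w c3 = 0"
    using line_three_dependent[OF L z1(1) z2(1) w(1)] .
  consider "c1 \<noteq> 0" | "c2 \<noteq> 0" | "c1 = 0" "c2 = 0" "c3 \<noteq> 0"
    using c by blast
  then show ?thesis
  proof cases
    case 1
    then show ?thesis
      using pivot[OF z1(3) z2(3) z1(2) z12 comb] by blast
  next
    case 2
    have "smul z2 c2 + smul z1 c1 + smul w c3 = 0"
      using comb by (simp add: algebra_simps)
    then show ?thesis
      using pivot[OF z2(3) z1(3) z2(2) z12[symmetric]] 2 by blast
  next
    case 3
    then have "smul w c3 = 0"
      using comb by (simp add: smul_zero_scalar)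
    then show ?thesis
      using smul_eq_zero_vector w(2) 3 by blast
  qed
qed

lemma singular_point_in_ppoints:
  assumes "p \<in> singular_points" "p \<in> ppoints smul L"
  obtains z where "z \<in> L" "z \<noteq> 0" "g z \<in> R0" "p = ppoint smul z"
proof -
  obtain s where "p = ppoint smul s" "g s \<in> R0"
    using assms(1) unfolding singular_points_def by blast
  moreover obtain z where "z \<in> L" "z \<noteq> 0" "p = ppoint smul z"
    using assms(2) unfolding ppoints_def by blast
  ultimately show ?thesis
    using that singular_of_ppoint_eq by metis
qed

lemma defines_quotient_if_radical:
  assumes U: "subspace smul U" and rad: "U \<subseteq> Rad_f f" and rq: "U \<inter> singular_radical = {0}"
  shows "defines_quotient smul singular_points U"
proof -
  have nonsingular: "g w \<notin> R0" if "w \<in> U" "w \<noteq> 0" for w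
    using that rad rq unfolding singular_radical_def by blast
  have "p \<notin> singular_points" if "p \<in> ppoints smul U" for p
    using that singular_point_in_ppoints nonsingular by metis
  moreover have "ppoints smul U \<inter> ppoints smul L = {}" if sec: "secant smul singular_points L" for L
  proof (rule ccontr)
    obtain p1 p2 where L: "is_line smul L" and p12: "p1 \<noteq> p2"
      and p1: "p1 \<in> singular_points" "p1 \<in> ppoints smul L"
      and p2: "p2 \<in> singular_points" "p2 \<in> ppoints smul L"
      using sec unfolding secant_def by blast
    obtain z1 z2 where "z1 \<in> L" "z1 \<noteq> 0" "g z1 \<in> R0" "p1 = ppoint smul z1"
      and "z2 \<in> L" "z2 \<noteq> 0" "g z2 \<in> R0" "p2 = ppoint smul z2"
      using singular_point_in_ppoints[OF p1] singular_point_in_ppoints[OF p2] by metis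
    moreover assume "ppoints smul U \<inter> ppoints smul L \<noteq> {}"
    then obtain u w where "u \<in> U" "w \<in> L" "w \<noteq> 0" "ppoint smul u = ppoint smul w"
      unfolding ppoints_def by blast
    then have "w \<in> L" "w \<noteq> 0" "w \<in> U"
      using ppoint_eqD subspace_smul[OF U] by metis+
    ultimately show False
      using radical_point_on_secant_singular[OF L] p12 rad nonsingular by blast
  qed
  ultimately show ?thesis
    unfolding defines_quotient_def by blast
qed

lemma exists_singular_not_orthogonal:
  assumes span: "rspan smul (\<Union>singular_points) = UNIV" and "f u y \<noteq> 0"
  obtains x where "x \<noteq> 0" "g x \<in> R0" "f u x \<noteq> 0"
proof (rule ccontr)
  assume none: "\<not> thesis"
  define W where "W = {v. f u v = 0}"
  have "f u x = 0" if "x \<noteq> 0" "g x \<in> R0" for x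
    using none that(1,2) \<open>\<And>x. \<lbrakk>x \<noteq> 0; g x \<in> R0; f u x \<noteq> 0\<rbrakk> \<Longrightarrow> thesis\<close> by blast
  then have "\<Union>singular_points \<subseteq> W"
    unfolding singular_points_def ppoint_def W_def by (auto simp: f_smul_right)
  moreover have "subspace smul W"
    unfolding subspace_def W_def by (simp add: f_zero_right f_add_right f_smul_right)
  ultimately have "rspan smul (\<Union>singular_points) \<subseteq> W"
    unfolding rspan_def by blast
  then show False
    using span assms(2) unfolding W_def by blast
qed

lemma secant_through_nonsingular_point:
  assumes u: "g u \<notin> R0" and x: "x \<noteq> 0" "g x \<in> R0" "f u x \<noteq> 0"
  obtains L where "secant smul singular_points L" "ppoint smul u \<in> ppoints smul L"
proof -
  define l where "l = inverse (f u x) * (- g u)"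
  define w where "w = u + smul x l"
  have u0: "u \<noteq> 0"
    using u g_zero by blast
  have "f u (smul x l) = - g u"
    unfolding f_smul_right l_def using x(3) by (simp add: mult.assoc[symmetric])
  then have "g w - g (smul x l) \<in> R0"
    using g_add[of u "smul x l"] unfolding w_def by simp
  then have "(g w - g (smul x l)) + g (smul x l) \<in> R0"
    using R0_add singular_smul[OF x(2)] by blast
  then have gw: "g w \<in> R0"
    by simp
  have indep: "a = 0 \<and> b = 0" if "smul u a + smul x b = 0" for a b
  proof (cases "a = 0")
    case True
    then show ?thesis
      using that smul_eq_zero_vector x(1) by (auto simp: smul_zero_scalar)
  next
    case False
    then show ?thesis
      using eq_smul_of_combination_eq_zero[OF that] singular_smul[OF x(2)] u by metis
  qed
  define L where "L = {smul u a + smul x b | a b. True}"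
  have "u = smul u 1 + smul x 0" "x = smul u 0 + smul x 1" "w = smul u 1 + smul x l"
    unfolding w_def by (simp_all add: smul_one smul_zero_scalar)
  then have L: "u \<in> L" "x \<in> L" "w \<in> L"
    unfolding L_def by blast+
  have "w \<noteq> 0"
    using indep[of 1 l] unfolding w_def by (auto simp: smul_one)
  have "ppoint smul x \<noteq> ppoint smul w"
  proof
    assume "ppoint smul x = ppoint smul w"
    then obtain m where "w = smul x m"
      using ppoint_eqD by metis
    then have "smul u 1 + smul x (l - m) = 0"
      unfolding w_def smul_diff_scalar smul_one by (simp add: algebra_simps)
    then show False
      using indep by force
  qed
  moreover have "is_line smul L"
    unfolding is_line_def L_def using indep by blast
  moreover have "ppoint smul x \<in> singular_points" "ppoint smul w \<in> singular_points"
    unfolding singular_points_def using x(1,2) gw \<open>w \<noteq> 0\<close> by blast+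
  moreover have "ppoint smul x \<in> ppoints smul L" "ppoint smul w \<in> ppoints smul L"
    "ppoint smul u \<in> ppoints smul L"
    unfolding ppoints_def using L x(1) \<open>w \<noteq> 0\<close> u0 by blast+
  ultimately show ?thesis
    using that unfolding secant_def by blast
qed

lemma radical_if_defines_quotient:
  assumes U: "subspace smul U" and span: "rspan smul (\<Union>singular_points) = UNIV"
    and quot: "defines_quotient smul singular_points U"
  shows "U \<subseteq> Rad_f f" "U \<inter> singular_radical = {0}"
proof -
  have nonsingular: "g u \<notin> R0" if "u \<in> U" "u \<noteq> 0" for u
    using that quot unfolding defines_quotient_def singular_points_def ppoints_def by blast
  show "U \<subseteq> Rad_f f"
  proof
    fix u assume "u \<in> U"
    show "u \<in> Rad_f f"
    proof (rule ccontr)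
      assume "u \<notin> Rad_f f"
      then obtain y where "f u y \<noteq> 0"
        unfolding Rad_f_def by blast
      then have "u \<noteq> 0"
        using f_zero_left by metis
      obtain x where "x \<noteq> 0" "g x \<in> R0" "f u x \<noteq> 0"
        using exists_singular_not_orthogonal[OF span \<open>f u y \<noteq> 0\<close>] .
      then obtain L where "secant smul singular_points L" "ppoint smul u \<in> ppoints smul L"
        using secant_through_nonsingular_point nonsingular[OF \<open>u \<in> U\<close> \<open>u \<noteq> 0\<close>] by metis
      then show False
        using quot \<open>u \<in> U\<close> \<open>u \<noteq> 0\<close> unfolding defines_quotient_def ppoints_def by blast
    qed
  qed
  show "U \<inter> singular_radical = {0}"
    using nonsingular subspace_def[of smul U] U g_zero f_zero_left
    unfolding singular_radical_def Rad_f_def by blast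
qed

end

theorem mainTheorem13:
  fixes \<sigma> :: "'k::division_ring \<Rightarrow> 'k" and \<epsilon> :: 'k
    and smul :: "'v::ab_group_add \<Rightarrow> 'k \<Rightarrow> 'v"
    and R :: "'k set set" and q :: "'v \<Rightarrow> 'k set set" and f :: "'v \<Rightarrow> 'v \<Rightarrow> 'k"
    and U :: "'v set"
  assumes "admissible_pair \<sigma> \<epsilon>"
    and "right_vector_space smul"
    and "closed_subgroup \<sigma> \<epsilon> R"
    and "gen_quadratic_form \<sigma> \<epsilon> smul R q f"
    and "\<exists>x. q x \<noteq> R"
    and "rspan smul (\<Union>(Pq smul R q)) = UNIV"
    and "subspace smul U"
  shows "((ppoints smul U \<inter> Pq smul R q = {})
          \<and> (\<forall>L. is_line smul L \<and> (\<exists>p1 p2. p1 \<noteq> p2 \<and> p1 \<in> Pq smul R q \<and> p2 \<in> Pq smul R q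
                   \<and> p1 \<in> ppoints smul L \<and> p2 \<in> ppoints smul L)
               \<longrightarrow> ppoints smul U \<inter> ppoints smul L = {}))
     \<longleftrightarrow> (U \<subseteq> Rad_f f \<and> U \<inter> Rad_q f R q = {0})"
proof -
  interpret Q: closed_quotient \<sigma> \<epsilon> R
    using assms(1,3) by (simp add: closed_quotient_def closed_quotient_axioms_def admissible_def)
  obtain g where q: "\<And>x. q x = Q.qclass (g x)"
    and g_smul: "\<And>x l. g (smul x l) - \<sigma> l * g x * l \<in> Q.R_lift"
    and g_add: "\<And>x y. g (x + y) - (g x + g y + f x y) \<in> Q.R_lift"
    using Q.gen_quadratic_form_lift[OF assms(4)] by blast
  interpret G: lifted_quadratic_form smul \<sigma> \<epsilon> f g Q.R_lift
    using assms(2,4) Q.sigma_mult Q.sigma_one Q.sigma_zero Q.R_lift_zero Q.R_lift_add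
      Q.R_lift_minus Q.R_lift_circ g_smul g_add
    by unfold_locales (auto simp: right_space_def gen_quadratic_form_def)
  have "Pq smul R q = G.singular_points" "Rad_q f R q = G.singular_radical"
    unfolding Pq_def G.singular_points_def Rad_q_def G.singular_radical_def q Q.qclass_eq_R_iff
    by simp_all
  then show ?thesis
    using G.defines_quotient_if_radical G.radical_if_defines_quotient assms(6,7)
    unfolding defines_quotient_def secant_def by (metis (no_types, lifting))
qed

end
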